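(* Let $d\ge2$, let $A$ be a symmetric positive definite real $d\times d$ matrix and $G$ an arbitrary real $d\times d$ matrix. Then there exists a real symmetric $d\times d$ matrix $S$ with $SG+G^TS=2SAS$ and $\mathrm{trace}(G-AS)=0$. *)

theory Defs
  imports "HOL-Analysis.Analysis"
begin

definition sym_pos_def_mat :: "real^'n^'n \<Rightarrow> bool" where
  "sym_pos_def_mat A \<longleftrightarrow> transpose A = A \<and> (\<forall>x. x \<noteq> 0 \<longrightarrow> x \<bullet> (A *v x) > 0)"

end

theory Submission
  imports Defs
begin

(* Call L_M P = M P + P M^T the Lyapunov operator of M. If L_M is injective, solve L_M P = 2 A.
   Since L_M commutes with transposition, P is symmetric, and P x = 0 forces
   2 x.(A x) = x.(L_M P x) = 2 (M^T x).(P x) = 0, so P is invertible. Then S = P^-1 satisfies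
   S M + M^T S = S (L_M P) S = 2 S A S and 2 trace (A S) = trace ((L_M P) S) = 2 trace M.
   For arbitrary G, L_(G + e I) = L_G + 2 e, which is injective for all but finitely many e
   because a linear map has only finitely many eigenvalues. Along e -> 0 the solutions stay
   bounded, since c |S x|^2 <= (S x).(A (S x)) = (S x).(M x) by the equation, and a limit
   point of them solves the equation for G because the solution set is closed. *)

lemma eigenvectors_linearly_independent:
  fixes f :: "'a::real_vector \<Rightarrow> 'a"
  assumes "linear f" and "finite C"
    and "\<And>c. c \<in> C \<Longrightarrow> v c \<noteq> 0 \<and> f (v c) = c *\<^sub>R v c"
    and "(\<Sum>c\<in>C. a c *\<^sub>R v c) = 0"
  shows "\<forall>c\<in>C. a c = 0"
  using assms(2-4)
proof (induction C arbitrary: a rule: finite_induct)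
  case empty
  then show ?case by simp
next
  case (insert c C)
  let ?u = "\<Sum>d\<in>insert c C. a d *\<^sub>R v d"
  have "f ?u = (\<Sum>d\<in>insert c C. a d *\<^sub>R f (v d))"
    using \<open>linear f\<close> by (simp add: linear_sum linear_scale o_def)
  also have "\<dots> = (\<Sum>d\<in>insert c C. (a d * d) *\<^sub>R v d)"
    using insert.prems(1) by (intro sum.cong) simp_all
  finally have fu: "f ?u = (\<Sum>d\<in>insert c C. (a d * d) *\<^sub>R v d)" .
  have cu: "c *\<^sub>R ?u = (\<Sum>d\<in>insert c C. (a d * c) *\<^sub>R v d)"
    by (simp only: scaleR_sum_right scaleR_scaleR mult.commute)
  have "(\<Sum>d\<in>C. (a d * (d - c)) *\<^sub>R v d) = (\<Sum>d\<in>insert c C. (a d * (d - c)) *\<^sub>R v d)"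
    using insert.hyps by simp
  also have "\<dots> = (\<Sum>d\<in>insert c C. (a d * d) *\<^sub>R v d - (a d * c) *\<^sub>R v d)"
    by (intro sum.cong) (simp_all add: right_diff_distrib scaleR_left_diff_distrib)
  also have "\<dots> = f ?u - c *\<^sub>R ?u"
    by (simp only: fu cu sum_subtractf)
  also have "\<dots> = 0"
    using insert.prems(2) \<open>linear f\<close> by (simp add: linear_0)
  finally have "\<forall>d\<in>C. a d * (d - c) = 0"
    using insert.prems(1) by (intro insert.IH) auto
  then have "\<forall>d\<in>C. a d = 0"
    using insert.hyps(2) by auto
  moreover from this have "a c = 0"
    using insert.prems insert.hyps by simp
  ultimately show ?case by simp
qed

lemma finite_eigenvalues:
  fixes f :: "'a::euclidean_space \<Rightarrow> 'a"
  assumes "linear f"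
  shows "finite {c. \<exists>v. v \<noteq> 0 \<and> f v = c *\<^sub>R v}"
proof -
  let ?E = "{c. \<exists>v. v \<noteq> 0 \<and> f v = c *\<^sub>R v}"
  define v where "v c = (SOME v. v \<noteq> 0 \<and> f v = c *\<^sub>R v)" for c
  have eigvec: "v c \<noteq> 0 \<and> f (v c) = c *\<^sub>R v c" if "c \<in> ?E" for c
    using someI_ex[OF that[unfolded mem_Collect_eq]] unfolding v_def .
  have "card C \<le> DIM('a)" if "C \<subseteq> ?E" "finite C" for C
  proof -
    have eigvecC: "\<And>c. c \<in> C \<Longrightarrow> v c \<noteq> 0 \<and> f (v c) = c *\<^sub>R v c"
      using eigvec \<open>C \<subseteq> ?E\<close> by blast
    have inj: "inj_on v C"
    proof (rule inj_onI)
      fix c d assume "c \<in> C" "d \<in> C" "v c = v d"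
      then have "c *\<^sub>R v c = d *\<^sub>R v c"
        using eigvecC by metis
      then show "c = d"
        using eigvecC[OF \<open>c \<in> C\<close>] by simp
    qed
    have "independent (v ` C)"
    proof (rule independent_if_scalars_zero)
      show "finite (v ` C)" using \<open>finite C\<close> by simp
    next
      fix u w assume "(\<Sum>w\<in>v ` C. u w *\<^sub>R w) = 0" "w \<in> v ` C"
      then have "(\<Sum>c\<in>C. u (v c) *\<^sub>R v c) = 0"
        by (simp add: sum.reindex[OF inj])
      with eigenvectors_linearly_independent[OF assms \<open>finite C\<close>, of v "\<lambda>c. u (v c)"] eigvecC
      have "\<forall>c\<in>C. u (v c) = 0" by blast
      then show "u w = 0" using \<open>w \<in> v ` C\<close> by blast
    qed
    then have "card (v ` C) \<le> DIM('a)"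
      by (rule independent_bound[THEN conjunct2])
    then show ?thesis by (simp add: card_image[OF inj])
  qed
  then show ?thesis using finite_if_finite_subsets_card_bdd by blast
qed

lemma sequence_avoiding_finite:
  fixes a :: "'a::{perfect_space, metric_space}"
  assumes "finite F"
  obtains x where "x \<longlonglongrightarrow> a" and "\<And>k. x k \<notin> F"
proof -
  have "a islimpt (UNIV - F) \<union> F"
    by simp
  then have "a islimpt (UNIV - F)"
    using islimpt_finite[OF assms] by (simp only: islimpt_Un) blast
  then show ?thesis
    using that unfolding islimpt_sequential by blast
qed

lemma closed_limit_bounded_snd:
  fixes x :: "nat \<Rightarrow> 'a::metric_space" and y :: "nat \<Rightarrow> 'b::heine_borel"
  assumes "closed F" and "\<And>k. (x k, y k) \<in> F" and "x \<longlonglongrightarrow> a" and "bounded (range y)"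
  shows "\<exists>b. (a, b) \<in> F"
proof -
  obtain b r where r: "strict_mono r" and b: "(y \<circ> r) \<longlonglongrightarrow> b"
    using bounded_imp_convergent_subsequence[OF assms(4)] by blast
  have "(x \<circ> r) \<longlonglongrightarrow> a"
    using LIMSEQ_subseq_LIMSEQ[OF assms(3) r] .
  then have "(\<lambda>k. (x (r k), y (r k))) \<longlonglongrightarrow> (a, b)"
    using b by (intro tendsto_Pair) (simp_all add: o_def)
  then have "(a, b) \<in> F"
    by (rule closed_sequentially[OF assms(1), rotated]) (rule assms(2))
  then show ?thesis ..
qed

lemma matrix_add_rdistrib: "((B::'a::semiring_1^'n^'m) + C) ** A = B ** A + C ** A"
  by (simp add: matrix_matrix_mult_def vec_eq_iff sum.distrib distrib_right)

lemma transpose_add: "transpose ((A::'a::plus^'n^'m) + B) = transpose A + transpose B"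
  by (simp add: transpose_def vec_eq_iff)

lemma trace_transpose: "trace (transpose (A::'a::semiring_1^'n^'n)) = trace A"
  by (simp add: trace_def transpose_def)

lemma trace_scaleR: "trace (c *\<^sub>R (A::real^'n^'n)) = c * trace A"
  by (simp add: trace_def sum_distrib_left)

lemma inner_matrix_vector_transpose: "x \<bullet> (B *v y) = (transpose B *v x) \<bullet> (y::real^'n)"
  by (simp add: dot_lmul_matrix)

lemma norm_matrix_le_onorm:
  fixes A :: "real^'n^'m"
  shows "norm A \<le> real CARD('m) * real CARD('n) * onorm ((*v) A)"
proof -
  have row: "norm (A $ i) \<le> real CARD('n) * onorm ((*v) A)" for i
  proof -
    have "norm (A $ i) \<le> (\<Sum>j\<in>UNIV. \<bar>A $ i $ j\<bar>)"
      by (rule norm_le_l1_cart)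
    also have "\<dots> \<le> real CARD('n) * onorm ((*v) A)"
      using sum_bounded_above[of UNIV "\<lambda>j. \<bar>A $ i $ j\<bar>", OF matrix_component_le_onorm] by simp
    finally show ?thesis .
  qed
  have "norm A \<le> (\<Sum>i\<in>UNIV. norm (A $ i))"
    unfolding norm_vec_def by (rule L2_set_le_sum) simp
  also have "\<dots> \<le> real CARD('m) * (real CARD('n) * onorm ((*v) A))"
    using sum_bounded_above[of UNIV "\<lambda>i. norm (A $ i)", OF row] by simp
  finally show ?thesis by (simp add: mult.assoc)
qed

lemma onorm_matrix_le_norm:
  fixes A :: "real^'n^'m"
  shows "onorm ((*v) A) \<le> real CARD('m) * real CARD('n) * norm A"
  by (rule onorm_le_matrix_component)
    (rule order_trans[OF component_le_norm_cart Finite_Cartesian_Product.norm_nth_le])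

lemma continuous_on_matrix_mult [continuous_intros]:
  fixes f :: "'a::topological_space \<Rightarrow> real^'n^'m" and g :: "'a \<Rightarrow> real^'p^'n"
  assumes "continuous_on S f" and "continuous_on S g"
  shows "continuous_on S (\<lambda>x. f x ** g x)"
  unfolding matrix_matrix_mult_def by (intro continuous_intros assms)

lemma continuous_on_transpose [continuous_intros]:
  fixes f :: "'a::topological_space \<Rightarrow> real^'n^'m"
  assumes "continuous_on S f"
  shows "continuous_on S (\<lambda>x. transpose (f x))"
  unfolding transpose_def by (intro continuous_intros assms)

lemma continuous_on_trace [continuous_intros]:
  fixes f :: "'a::topological_space \<Rightarrow> real^'n^'n"
  assumes "continuous_on S f"
  shows "continuous_on S (\<lambda>x. trace (f x))"
  unfolding trace_def by (intro continuous_intros assms)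

lemma positive_quadratic_form_coercive:
  fixes A :: "real^'n^'n"
  assumes "\<And>x. x \<noteq> 0 \<Longrightarrow> x \<bullet> (A *v x) > 0"
  obtains c where "c > 0" "\<And>x. c * (norm x)\<^sup>2 \<le> x \<bullet> (A *v x)"
proof -
  have "sphere (0::real^'n) 1 \<noteq> {}"
    by simp
  moreover have "continuous_on (sphere 0 1) (\<lambda>x::real^'n. x \<bullet> (A *v x))"
    by (intro continuous_intros)
  ultimately obtain x0 where x0: "x0 \<in> sphere 0 1"
    and min: "\<And>y. y \<in> sphere 0 1 \<Longrightarrow> x0 \<bullet> (A *v x0) \<le> y \<bullet> (A *v y)"
    using continuous_attains_inf[OF compact_sphere] by blast
  show ?thesis
  proof
    have "x0 \<noteq> 0" using x0 by auto
    then show "x0 \<bullet> (A *v x0) > 0" using assms by blast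
  next
    fix x :: "real^'n"
    show "x0 \<bullet> (A *v x0) * (norm x)\<^sup>2 \<le> x \<bullet> (A *v x)"
    proof (cases "x = 0")
      case False
      have "x0 \<bullet> (A *v x0) \<le> (x /\<^sub>R norm x) \<bullet> (A *v (x /\<^sub>R norm x))"
        using False by (intro min) simp
      also have "\<dots> = (x \<bullet> (A *v x)) / (norm x)\<^sup>2"
        by (simp add: matrix_vector_mult_scaleR power2_eq_square divide_inverse)
      finally show ?thesis using False by (simp add: field_simps)
    qed simp
  qed
qed

definition lyapunov :: "real^'n^'n \<Rightarrow> real^'n^'n \<Rightarrow> real^'n^'n" where
  "lyapunov M P = M ** P + P ** transpose M"

lemma linear_lyapunov: "linear (lyapunov M)"
  by (rule linearI) (simp_all add: lyapunov_def matrix_add_ldistrib matrix_add_rdistrib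
      matrix_scalar_ac scalar_matrix_assoc[symmetric] algebra_simps)

lemma transpose_lyapunov: "transpose (lyapunov M P) = lyapunov M (transpose P)"
  by (simp add: lyapunov_def transpose_add matrix_transpose_mul add.commute)

lemma lyapunov_shift: "lyapunov (M + e *\<^sub>R mat 1) P = lyapunov M P + (2 * e) *\<^sub>R P"
proof -
  have "(2 * e) *\<^sub>R P = e *\<^sub>R P + e *\<^sub>R P"
    by (metis mult_2 scaleR_add_left)
  then show ?thesis
    by (simp add: lyapunov_def transpose_add transpose_scalar matrix_add_ldistrib matrix_add_rdistrib
        matrix_scalar_ac scalar_matrix_assoc[symmetric] add_ac)
qed

lemma inner_lyapunov:
  assumes "transpose P = P"
  shows "x \<bullet> (lyapunov M P *v x) = 2 * ((transpose M *v x) \<bullet> (P *v x))"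
proof -
  have "x \<bullet> (lyapunov M P *v x) = x \<bullet> (M *v (P *v x)) + x \<bullet> (P *v (transpose M *v x))"
    by (simp add: lyapunov_def matrix_vector_mult_add_rdistrib matrix_vector_mul_assoc inner_add_right
        del: transpose_matrix_vector)
  also have "\<dots> = (transpose M *v x) \<bullet> (P *v x) + (P *v x) \<bullet> (transpose M *v x)"
    by (metis assms inner_matrix_vector_transpose)
  finally show ?thesis by (simp add: inner_commute)
qed

lemma finite_not_inj_lyapunov_shift: "finite {e. \<not> inj (lyapunov (M + e *\<^sub>R mat 1))}"
proof -
  let ?E = "{c. \<exists>P. P \<noteq> 0 \<and> lyapunov M P = c *\<^sub>R P}"
  have "{e. \<not> inj (lyapunov (M + e *\<^sub>R mat 1))} \<subseteq> (\<lambda>c. - c / 2) ` ?E"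
  proof
    fix e assume "e \<in> {e. \<not> inj (lyapunov (M + e *\<^sub>R mat 1))}"
    then obtain P where "P \<noteq> 0" "lyapunov (M + e *\<^sub>R mat 1) P = 0"
      using linear_injective_0[OF linear_lyapunov] by blast
    then have "- 2 * e \<in> ?E"
      by (auto simp: lyapunov_shift eq_neg_iff_add_eq_0)
    then show "e \<in> (\<lambda>c. - c / 2) ` ?E"
      by (intro image_eqI[where x = "- 2 * e"]) simp_all
  qed
  then show ?thesis
    using finite_eigenvalues[OF linear_lyapunov] finite_subset by blast
qed

definition riccati_solution :: "real^'n^'n \<Rightarrow> real^'n^'n \<Rightarrow> real^'n^'n \<Rightarrow> bool" where
  "riccati_solution A M S \<longleftrightarrow> transpose S = S \<and>
     S ** M + transpose M ** S = 2 *\<^sub>R (S ** A ** S) \<and> trace (M - A ** S) = 0"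

lemma riccati_solution_if_inverse_lyapunov:
  assumes symP: "transpose P = P" and LP: "lyapunov M P = 2 *\<^sub>R A"
    and SP: "S ** P = mat 1" and PS: "P ** S = mat 1"
  shows "riccati_solution A M S"
proof -
  have "transpose S ** P = mat 1"
    using PS symP by (metis matrix_transpose_mul transpose_mat)
  then have symS: "transpose S = S"
    by (metis PS matrix_mul_assoc matrix_mul_lid matrix_mul_rid)
  have "S ** lyapunov M P ** S = S ** M ** (P ** S) + (S ** P) ** transpose M ** S"
    by (simp add: lyapunov_def matrix_add_ldistrib matrix_add_rdistrib matrix_mul_assoc)
  then have riccati: "S ** M + transpose M ** S = 2 *\<^sub>R (S ** A ** S)"
    using SP PS LP by (simp add: matrix_scalar_ac scalar_matrix_assoc[symmetric])
  have "trace (lyapunov M P ** S) = trace (M ** (P ** S)) + trace (P ** (transpose M ** S))"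
    by (simp add: lyapunov_def matrix_add_rdistrib trace_add matrix_mul_assoc)
  also have "\<dots> = trace (M ** (P ** S)) + trace (transpose M ** (S ** P))"
    by (metis trace_mul_sym matrix_mul_assoc)
  also have "\<dots> = 2 * trace M"
    using SP PS by (simp add: trace_transpose)
  finally have "trace (A ** S) = trace M"
    using LP by (simp add: scalar_matrix_assoc[symmetric] trace_scaleR)
  then show ?thesis
    using symS riccati by (simp add: riccati_solution_def trace_sub)
qed

lemma riccati_solution_if_inj_lyapunov:
  assumes "sym_pos_def_mat A" and inj: "inj (lyapunov M)"
  shows "\<exists>S. riccati_solution A M S"
proof -
  have symA: "transpose A = A" and posA: "\<And>x. x \<noteq> 0 \<Longrightarrow> x \<bullet> (A *v x) > 0"
    using assms(1) unfolding sym_pos_def_mat_def by auto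
  obtain P where LP: "lyapunov M P = 2 *\<^sub>R A"
    using linear_injective_imp_surjective[OF linear_lyapunov inj] by (metis surjD)
  have "lyapunov M (transpose P) = lyapunov M P"
    using LP symA by (simp flip: transpose_lyapunov add: transpose_scalar)
  then have symP: "transpose P = P"
    using inj by (simp add: inj_eq)
  have "x = 0" if "P *v x = 0" for x
  proof -
    have "2 * (x \<bullet> (A *v x)) = x \<bullet> (lyapunov M P *v x)"
      using LP by (simp add: scaleR_matrix_vector_assoc[symmetric])
    also have "\<dots> = 0"
      using that by (simp add: inner_lyapunov[OF symP])
    finally show "x = 0"
      using posA by force
  qed
  then have "inj ((*v) P)"
    using linear_injective_0[OF matrix_vector_mul_linear] by blast
  then obtain S where SP: "S ** P = mat 1"
    using matrix_left_invertible_injective by blast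
  then have "P ** S = mat 1"
    using matrix_left_right_inverse by blast
  then show ?thesis
    using riccati_solution_if_inverse_lyapunov[OF symP LP SP] by blast
qed

lemma riccati_solution_onorm_le:
  fixes A M S :: "real^'n^'n"
  assumes "riccati_solution A M S" and "c > 0"
    and coercive: "\<And>x. c * (norm x)\<^sup>2 \<le> x \<bullet> (A *v x)"
  shows "onorm ((*v) S) \<le> onorm ((*v) M) / c"
proof (rule onorm_le)
  fix x :: "real^'n"
  have symS: "transpose S = S"
    and riccati: "lyapunov (transpose M) S = 2 *\<^sub>R (S ** A ** S)"
    using assms(1) by (simp_all add: riccati_solution_def lyapunov_def add.commute)
  define y where "y = S *v x"
  have "2 * ((M *v x) \<bullet> y) = x \<bullet> (lyapunov (transpose M) S *v x)"
    unfolding y_def by (simp add: inner_lyapunov[OF symS])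
  also have "\<dots> = 2 * (x \<bullet> (S *v (A *v y)))"
    unfolding riccati y_def
    by (simp add: scaleR_matrix_vector_assoc[symmetric] matrix_vector_mul_assoc matrix_mul_assoc
        del: transpose_matrix_vector)
  also have "x \<bullet> (S *v (A *v y)) = y \<bullet> (A *v y)"
    unfolding y_def by (metis symS inner_matrix_vector_transpose)
  finally have "c * (norm y)\<^sup>2 \<le> (M *v x) \<bullet> y"
    using coercive[of y] by simp
  also have "\<dots> \<le> norm (M *v x) * norm y"
    by (rule norm_cauchy_schwarz)
  also have "\<dots> \<le> onorm ((*v) M) * norm x * norm y"
    by (simp add: mult_right_mono onorm[OF matrix_vector_mul_bounded_linear])
  finally have "c * norm y \<le> onorm ((*v) M) * norm x \<or> y = 0"
    by (auto simp: power2_eq_square)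
  then show "norm (S *v x) \<le> onorm ((*v) M) / c * norm x"
    unfolding y_def using \<open>c > 0\<close> onorm_pos_le[OF matrix_vector_mul_bounded_linear, of M]
    by (auto simp: field_simps)
qed

lemma closed_riccati_solutions: "closed {(M, S). riccati_solution A M S}"
  unfolding riccati_solution_def case_prod_unfold
  by (intro closed_Collect_conj closed_Collect_eq continuous_intros)

lemma riccati_solution_limit:
  fixes A G :: "real^'n^'n"
  assumes "sym_pos_def_mat A" and "M \<longlonglongrightarrow> G" and "\<And>k. riccati_solution A (M k) (S k)"
  shows "\<exists>S. riccati_solution A G S"
proof -
  obtain c where "c > 0" and coercive: "\<And>x. c * (norm x)\<^sup>2 \<le> x \<bullet> (A *v x)"
    using assms(1) positive_quadratic_form_coercive unfolding sym_pos_def_mat_def by blast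
  have "Bseq M"
    using assms(2) by (rule convergent_imp_Bseq[OF convergentI])
  then obtain K where K: "\<And>k. norm (M k) \<le> K"
    using BseqE by metis
  let ?d = "real CARD('n) * real CARD('n)"
  have "norm (S k) \<le> ?d * (?d * K / c)" for k
  proof -
    have "norm (S k) \<le> ?d * onorm ((*v) (S k))"
      by (rule norm_matrix_le_onorm)
    also have "onorm ((*v) (S k)) \<le> onorm ((*v) (M k)) / c"
      by (rule riccati_solution_onorm_le[OF assms(3) \<open>c > 0\<close> coercive])
    also have "onorm ((*v) (M k)) \<le> ?d * norm (M k)"
      by (rule onorm_matrix_le_norm)
    also have "norm (M k) \<le> K"
      by (rule K)
    finally show ?thesis
      using \<open>c > 0\<close> by (simp add: divide_right_mono mult_left_mono)
  qed
  then have "bounded (range S)"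
    by (auto simp: bounded_iff)
  then show ?thesis
    using closed_limit_bounded_snd[OF closed_riccati_solutions[of A], where x = M and y = S] assms(2,3)
    by auto
qed

theorem theorem4p9:
  fixes A G :: "real^'n^'n"
  assumes "CARD('n) \<ge> 2"
    and "sym_pos_def_mat A"
  shows "\<exists>S :: real^'n^'n. transpose S = S \<and>
           S ** G + transpose G ** S = 2 *\<^sub>R (S ** A ** S) \<and>
           trace (G - A ** S) = 0"
proof -
  obtain e :: "nat \<Rightarrow> real" where e: "e \<longlonglongrightarrow> 0"
    and avoid: "\<And>k. e k \<notin> {e. \<not> inj (lyapunov (G + e *\<^sub>R mat 1))}"
    using sequence_avoiding_finite[OF finite_not_inj_lyapunov_shift[of G], of "0::real"] by blast
  have "\<forall>k. \<exists>S. riccati_solution A (G + e k *\<^sub>R mat 1) S"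
    using riccati_solution_if_inj_lyapunov[OF assms(2)] avoid by simp
  from choice[OF this] obtain S where sol: "\<And>k. riccati_solution A (G + e k *\<^sub>R mat 1) (S k)"
    by blast
  have "(\<lambda>k. G + e k *\<^sub>R mat 1) \<longlonglongrightarrow> G"
    using tendsto_add[OF tendsto_const tendsto_scaleR[OF e tendsto_const]] by simp
  then obtain S where "riccati_solution A G S"
    using sol riccati_solution_limit[OF assms(2)] by blast
  then show ?thesis
    unfolding riccati_solution_def by blast
qed

end
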